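(* Let $T$ be a string, let $1\le j\le |T|$, $1\le i\le j+1$, let $w$ be a string, and let $L=T[1..i-1]$, $R=T[j+1..|T|]$ and $T'=LwR$, with $|L|\ge |R|$ and $|w|\le |L|/2$. Suppose $T'$ is periodic and write $T'=(uv)^k u$ with $k\ge 2$ an integer and strings $u,v$ with $|uv|=\mathsf{per}(T')$. Suppose further that $|uvu|>|Lw|$, and let $x=\mathsf{cov}(\mathsf{bord}(uvu))$. Then $x$ covers $uvu$ if and only if $\mathsf{range}(Lw,|x|)\ge |uvu|-\max\{|u|,|x|\}$.
   Context: $S[i..j]$ denotes the factor of $S$ from position $i$ to $j$ (empty if $i>j$). A border of a nonempty string $S$ is a string that is both a proper prefix and a proper suffix of $S$; $\mathsf{bord}(S)$ is the longest border. If $S$ has a border $b$ then $|S|-|b|$ is a period of $S$; $\mathsf{per}(S)$ is the smallest period, and $S$ is periodic if $\mathsf{per}(S)\le |S|/2$. A string $f$ covers $S$ (is a cover of $S$) if every position of $S$ lies inside some occurrence of $f$ in $S$; $\mathsf{cov}(S)$ is the shortest cover of $S$. For $1\le k\le |S|$, $\mathsf{range}(S,k)$ is the largest $r$ such that $S[1..k]$ covers $S[1..r]$. *)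

theory Defs
  imports Main "HOL-Library.Sublist"
begin

(* Strings are lists; positions are 0-based internally. S[1..i-1] = take (i-1) S,
   S[j+1..|S|] = drop j S. *)

definition is_border :: "'a list \<Rightarrow> 'a list \<Rightarrow> bool" where
  "is_border b S \<longleftrightarrow> length b < length S \<and> prefix b S \<and> suffix b S"

(* longest border (meaningful for nonempty S) *)
definition bord :: "'a list \<Rightarrow> 'a list" where
  "bord S = take (GREATEST l. is_border (take l S) S) S"

definition is_period :: "nat \<Rightarrow> 'a list \<Rightarrow> bool" where
  "is_period p S \<longleftrightarrow> 0 < p \<and> p \<le> length S \<and>
     (\<forall>i. i + p < length S \<longrightarrow> S ! i = S ! (i + p))"

definition per :: "'a list \<Rightarrow> nat" where
  "per S = (LEAST p. is_period p S)"

definition periodic :: "'a list \<Rightarrow> bool" where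
  "periodic S \<longleftrightarrow> S \<noteq> [] \<and> 2 * per S \<le> length S"

definition occ_at :: "'a list \<Rightarrow> 'a list \<Rightarrow> nat \<Rightarrow> bool" where
  "occ_at f S p \<longleftrightarrow> p + length f \<le> length S \<and> take (length f) (drop p S) = f"

definition covers :: "'a list \<Rightarrow> 'a list \<Rightarrow> bool" where
  "covers f S \<longleftrightarrow> (\<forall>q < length S. \<exists>p. p \<le> q \<and> q < p + length f \<and> occ_at f S p)"

(* shortest cover (every cover of S is a prefix of S) *)
definition cov :: "'a list \<Rightarrow> 'a list" where
  "cov S = take (LEAST l. covers (take l S) S) S"

definition range_cov :: "'a list \<Rightarrow> nat \<Rightarrow> nat" where
  "range_cov S k = (GREATEST r. r \<le> length S \<and> covers (take k S) (take r S))"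

end

theory Submission imports Defs begin

text \<open>
Let \<open>p = |uv| = per T'\<close>, \<open>S = uvu\<close>, \<open>b = bord S\<close> and \<open>x = cov b\<close>. Since \<open>T'\<close> has
minimal period \<open>p\<close>, a border longer than \<open>p\<close> would give \<open>T'\<close> a smaller period, so
\<open>|b| \<le> p \<le> |Lw|\<close> and \<open>x\<close> is a prefix of \<open>Lw\<close>. Moreover \<open>x\<close> occurs at
\<open>t = |S| - max |u| |x|\<close>: inside the suffix \<open>u\<close> if \<open>|x| \<le> |u|\<close>, as a suffix of \<open>b\<close> otherwise.
If \<open>x\<close> covers \<open>S\<close>, the occurrence covering position \<open>t - 1\<close> either ends inside \<open>Lw\<close>, which
shows \<open>range(Lw, |x|) \<ge> t\<close>, or, because \<open>|L| \<ge> |R|\<close> and \<open>k \<ge> 2\<close> make \<open>Lw\<close> long, it overlaps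
the occurrence at \<open>t\<close> in more than half of \<open>x\<close>; then \<open>x\<close> has a period \<open>d\<close> with
\<open>2d \<le> |x|\<close> and its prefix of length \<open>|x| - d\<close> would be a shorter cover of \<open>b\<close>.
Conversely, the prefix of length \<open>t \<ge> |S| - |b|\<close> covered by \<open>x\<close> together with the suffix
\<open>b\<close>, which \<open>x\<close> covers, make up all of \<open>S\<close>.
\<close>

lemma occ_at_iff_nth:
  "occ_at f S p \<longleftrightarrow> p + length f \<le> length S \<and> (\<forall>i<length f. S ! (p + i) = f ! i)"
proof
  assume "occ_at f S p"
  then have len: "p + length f \<le> length S" and eq: "take (length f) (drop p S) = f"
    by (auto simp: occ_at_def)
  have "S ! (p + i) = f ! i" if "i < length f" for i
    using nth_take[OF that, of "drop p S"] len that by (simp add: eq)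
  with len show "p + length f \<le> length S \<and> (\<forall>i<length f. S ! (p + i) = f ! i)" by blast
next
  assume h: "p + length f \<le> length S \<and> (\<forall>i<length f. S ! (p + i) = f ! i)"
  then have "take (length f) (drop p S) = f"
    by (intro nth_equalityI) auto
  with h show "occ_at f S p" by (simp add: occ_at_def)
qed

lemma occ_at_trans:
  assumes f: "occ_at f b s" and b: "occ_at b S t"
  shows "occ_at f S (t + s)"
  unfolding occ_at_iff_nth
proof (intro conjI allI impI)
  show "t + s + length f \<le> length S" using f b by (simp add: occ_at_iff_nth)
  fix i assume "i < length f"
  then have "S ! (t + (s + i)) = b ! (s + i)" "b ! (s + i) = f ! i"
    using f b by (simp_all add: occ_at_iff_nth)
  then show "S ! (t + s + i) = f ! i" by (simp add: add.assoc)
qed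

lemma take_prefix_eq: "prefix x S \<Longrightarrow> n \<le> length x \<Longrightarrow> take n x = take n S"
  by (auto simp: prefix_def)

lemma prefix_imp_occ_at: "prefix f S \<Longrightarrow> occ_at f S 0"
  by (auto simp: occ_at_def prefix_def)

lemma suffix_imp_occ_at: "suffix f S \<Longrightarrow> occ_at f S (length S - length f)"
  by (auto simp: occ_at_def suffix_def)

lemma occ_at_take: "occ_at f (take r S) s \<Longrightarrow> occ_at f S s"
  unfolding occ_at_iff_nth by auto

lemma occ_at_in_take: "occ_at f S s \<Longrightarrow> s + length f \<le> r \<Longrightarrow> occ_at f (take r S) s"
  unfolding occ_at_iff_nth by auto

lemma occ_at_overlap_is_period:
  assumes "occ_at x S s" "occ_at x S t" "s < t" "t < s + length x"
  shows "is_period (t - s) x"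
  unfolding is_period_def
proof (intro conjI allI impI)
  fix i assume i: "i + (t - s) < length x"
  have "x ! i = S ! (t + i)" using assms(2) i by (simp add: occ_at_iff_nth)
  also have "t + i = s + (i + (t - s))" using assms(3) by simp
  also have "S ! \<dots> = x ! (i + (t - s))" using assms(1) i by (simp only: occ_at_iff_nth)
  finally show "x ! i = x ! (i + (t - s))" .
qed (use assms in auto)

lemma covers_refl: "covers S S"
  unfolding covers_def occ_at_def by (auto intro!: exI[of _ 0])

lemma covers_trans:
  assumes "covers z x" "covers x S"
  shows "covers z S"
  unfolding covers_def
proof (intro allI impI)
  fix q assume "q < length S"
  then obtain p where p: "p \<le> q" "q < p + length x" "occ_at x S p"
    using assms(2) unfolding covers_def by blast
  then obtain p' where p': "p' \<le> q - p" "q - p < p' + length z" "occ_at z x p'"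
    using assms(1) unfolding covers_def by (metis less_diff_conv2 add.commute)
  have "occ_at z S (p + p')" using occ_at_trans[OF p'(3) p(3)] .
  with p p' show "\<exists>p\<le>q. q < p + length z \<and> occ_at z S p" by (intro exI[of _ "p + p'"]) auto
qed

lemma covers_occ_at_end:
  assumes "covers x S" "S \<noteq> []"
  shows "occ_at x S (length S - length x)"
proof -
  obtain p where p: "length S - 1 < p + length x" "occ_at x S p"
    using assms unfolding covers_def by (metis diff_less length_greater_0_conv zero_less_one)
  moreover from p have "p + length x \<le> length S" by (simp add: occ_at_def)
  ultimately have "p = length S - length x" by linarith
  with p show ?thesis by simp
qed

lemma covers_take_occ_end:
  assumes "covers x S" "occ_at x S s"
  shows "covers x (take (s + length x) S)"
  unfolding covers_def
proof (intro allI impI)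
  fix q assume q: "q < length (take (s + length x) S)"
  have occ_s: "occ_at x (take (s + length x) S) s" using occ_at_in_take[OF assms(2)] by simp
  show "\<exists>p\<le>q. q < p + length x \<and> occ_at x (take (s + length x) S) p"
  proof (cases "s \<le> q")
    case True
    with q occ_s show ?thesis by auto
  next
    case False
    have "q < length S" using q by simp
    then obtain p where p: "p \<le> q" "q < p + length x" "occ_at x S p"
      using assms(1) unfolding covers_def by blast
    have "p + length x \<le> s + length x" using False p(1) by simp
    with p(3) have "occ_at x (take (s + length x) S) p" by (rule occ_at_in_take)
    with p(1,2) show ?thesis by blast
  qed
qed

lemma covers_prefix_suffix:
  assumes "covers x (take r S)" "covers x b" "suffix b S" "length S \<le> r + length b"
  shows "covers x S"
  unfolding covers_def
proof (intro allI impI)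
  fix q assume q: "q < length S"
  show "\<exists>p\<le>q. q < p + length x \<and> occ_at x S p"
  proof (cases "q < r")
    case True
    with q obtain p where "p \<le> q" "q < p + length x" "occ_at x (take r S) p"
      using assms(1) unfolding covers_def by auto
    then show ?thesis using occ_at_take by blast
  next
    case False
    define ofs where "ofs = length S - length b"
    have b_at: "occ_at b S ofs" unfolding ofs_def using assms(3) by (rule suffix_imp_occ_at)
    have "q - ofs < length b" "ofs \<le> q" using False q assms(4) unfolding ofs_def by auto
    then obtain p where p: "p \<le> q - ofs" "q - ofs < p + length x" "occ_at x b p"
      using assms(2) unfolding covers_def by blast
    with \<open>ofs \<le> q\<close> show ?thesis using occ_at_trans[OF p(3) b_at] by (intro exI[of _ "ofs + p"]) auto
  qed
qed

lemma covers_take_if_period: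
  assumes "is_period d x" "2 * d \<le> length x"
  shows "covers (take (length x - d) x) x"
  unfolding covers_def
proof (intro allI impI)
  fix q assume q: "q < length x"
  let ?y = "take (length x - d) x"
  have at_0: "occ_at ?y x 0" by (simp add: occ_at_def)
  have "x ! (d + i) = x ! i" if "i < length x - d" for i
    using assms(1) that unfolding is_period_def by (metis add.commute less_diff_conv)
  then have at_d: "occ_at ?y x d" using assms(2) by (simp add: occ_at_iff_nth)
  show "\<exists>p\<le>q. q < p + length ?y \<and> occ_at ?y x p"
  proof (cases "q < length x - d")
    case True
    with at_0 show ?thesis by auto
  next
    case False
    with q at_d assms(2) show ?thesis by (intro exI[of _ d]) auto
  qed
qed

lemma length_cov: "length (cov S) = (LEAST l. covers (take l S) S)"
proof -
  have "(LEAST l. covers (take l S) S) \<le> length S"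
    by (rule Least_le) (simp add: covers_refl)
  then show ?thesis by (simp add: cov_def)
qed

lemma covers_cov: "covers (cov S) S"
  unfolding cov_def by (rule LeastI[of _ "length S"]) (simp add: covers_refl)

lemma length_cov_le: "covers (take l S) S \<Longrightarrow> length (cov S) \<le> l"
  unfolding length_cov by (rule Least_le)

lemma prefix_cov: "prefix (cov S) S"
  unfolding cov_def by (rule take_is_prefix)

lemma length_cov_lt_period:
  assumes "is_period d (cov S)"
  shows "length (cov S) < 2 * d"
proof (rule ccontr)
  assume "\<not> length (cov S) < 2 * d"
  then have "covers (take (length (cov S) - d) (cov S)) (cov S)"
    using assms by (intro covers_take_if_period) auto
  then have "covers (take (length (cov S) - d) S) S"
    using covers_trans[OF _ covers_cov] take_prefix_eq[OF prefix_cov, of "length (cov S) - d" S]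
    by simp
  then have "length (cov S) \<le> length (cov S) - d" by (rule length_cov_le)
  moreover have "0 < d" "d \<le> length (cov S)" using assms by (auto simp: is_period_def)
  ultimately show False by simp
qed

lemma is_border_take_length: "is_border b S \<Longrightarrow> b = take (length b) S"
  by (auto simp: is_border_def prefix_def)

lemma bord_longest_border:
  assumes "is_border b S"
  shows "is_border (bord S) S" "length b \<le> length (bord S)"
proof -
  define Q where "Q = (\<lambda>l. is_border (take l S) S)"
  have bounded: "l \<le> length S" if "Q l" for l
    using that unfolding Q_def is_border_def by (cases "length S \<le> l") auto
  have "Q (length b)" unfolding Q_def using assms is_border_take_length by metis
  then have "Q (Greatest Q)" "length b \<le> Greatest Q"
    using GreatestI_nat[of Q] Greatest_le_nat[of Q] bounded by blast+
  moreover have "bord S = take (Greatest Q) S" unfolding bord_def Q_def ..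
  moreover have "Greatest Q \<le> length S" using bounded \<open>Q (Greatest Q)\<close> .
  ultimately show "is_border (bord S) S" "length b \<le> length (bord S)"
    unfolding Q_def by auto
qed

lemma is_border_bord: "S \<noteq> [] \<Longrightarrow> is_border (bord S) S"
  by (rule bord_longest_border(1)[of "[]"]) (simp add: is_border_def)

lemma length_le_bord: "is_border b S \<Longrightarrow> length b \<le> length (bord S)"
  by (rule bord_longest_border(2))

lemma is_border_is_period:
  assumes "is_border b S"
  shows "is_period (length S - length b) S"
  unfolding is_period_def
proof (intro conjI allI impI)
  fix i assume i: "i + (length S - length b) < length S"
  obtain zs where zs: "S = zs @ b" using assms unfolding is_border_def suffix_def by blast
  have "i < length b" using i zs by simp
  then have "S ! i = b ! i" using assms is_border_take_length by (metis nth_take)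
  also have "\<dots> = S ! (i + (length S - length b))" using zs by (simp add: nth_append add.commute)
  finally show "S ! i = S ! (i + (length S - length b))" .
qed (use assms in \<open>auto simp: is_border_def\<close>)

lemma is_period_per: "X \<noteq> [] \<Longrightarrow> is_period (per X) X"
  unfolding per_def by (rule LeastI[of _ "length X"]) (simp add: is_period_def)

lemma per_le: "is_period q X \<Longrightarrow> per X \<le> q"
  unfolding per_def by (rule Least_le)

lemma is_period_extend:
  assumes p: "is_period p X" and q: "is_period q (take m X)" and "p + q \<le> m" "m \<le> length X"
  shows "is_period q X"
proof -
  have per_p: "X ! j = X ! (j + p)" if "j + p < length X" for j
    using p that unfolding is_period_def by blast
  have per_q: "X ! j = X ! (j + q)" if "j + q < m" for j
    using q that assms(4) unfolding is_period_def by auto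
  have "X ! i = X ! (i + q)" if "i + q < length X" for i
    using that
  proof (induction i rule: less_induct)
    case (less i)
    show ?case
    proof (cases "i + q < m")
      case True
      then show ?thesis by (rule per_q)
    next
      case False
      then have "p \<le> i" using assms(3) by simp
      have "X ! i = X ! (i - p)" using per_p[of "i - p"] \<open>p \<le> i\<close> less.prems by simp
      also have "\<dots> = X ! (i - p + q)" using less p \<open>p \<le> i\<close> by (simp add: is_period_def)
      also have "\<dots> = X ! (i - p + q + p)" using per_p[of "i - p + q"] \<open>p \<le> i\<close> less.prems by simp
      also have "i - p + q + p = i + q" using \<open>p \<le> i\<close> by simp
      finally show ?thesis .
    qed
  qed
  with q assms(4) show ?thesis by (auto simp: is_period_def)
qed

lemma length_border_le_max_per:
  assumes b: "is_border b S" and S: "prefix S X" and "X \<noteq> []"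
  shows "length b \<le> max (per X) (length S - per X)"
proof (cases "length b < per X")
  case False
  have "take (length S) X = S" using S by (auto simp: prefix_def)
  then have "is_period (length S - length b) (take (length S) X)"
    using is_border_is_period[OF b] by simp
  moreover have "per X + (length S - length b) \<le> length S"
    using False b by (simp add: is_border_def)
  moreover have "length S \<le> length X" using S by (rule prefix_length_le)
  ultimately have "is_period (length S - length b) X"
    by (intro is_period_extend[OF is_period_per[OF \<open>X \<noteq> []\<close>]])
  then have "per X \<le> length S - length b" by (rule per_le)
  with b have "length b \<le> length S - per X" unfolding is_border_def by linarith
  then show ?thesis by simp
qed simp

lemma range_cov_bounds:
  shows "range_cov P k \<le> length P"
    and "covers (take k P) (take (range_cov P k) P)"
    and "r \<le> length P \<Longrightarrow> covers (take k P) (take r P) \<Longrightarrow> r \<le> range_cov P k"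
proof -
  define R where "R = (\<lambda>r. r \<le> length P \<and> covers (take k P) (take r P))"
  have "R 0" unfolding R_def covers_def by simp
  then have "R (Greatest R)" by (rule GreatestI_nat[of R 0 "length P"]) (simp add: R_def)
  then show "range_cov P k \<le> length P" "covers (take k P) (take (range_cov P k) P)"
    unfolding range_cov_def R_def by auto
  show "r \<le> range_cov P k" if "r \<le> length P" "covers (take k P) (take r P)"
    unfolding range_cov_def using that by (intro Greatest_le_nat[of _ r "length P"]) auto
qed

lemma covers_cov_border_iff_range_cov:
  assumes b: "is_border b S" and u: "is_border u S" "length u \<le> length b"
    and P: "prefix P S" "length b \<le> length P"
    and long: "2 * length S \<le> 2 * length P + length u"
  shows "covers (cov b) S \<longleftrightarrow>
    length S - max (length u) (length (cov b)) \<le> range_cov P (length (cov b))"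
proof -
  define x where "x = cov b"
  define M where "M = max (length u) (length x)"
  define t where "t = length S - M"
  have b_S: "length b < length S" "prefix b S" "suffix b S" using b by (auto simp: is_border_def)
  have x_b: "covers x b" unfolding x_def by (rule covers_cov)
  have x_b_prefix: "prefix x b" unfolding x_def by (rule prefix_cov)
  then have x_S: "prefix x S" using b_S(2) by (rule prefix_order.trans)
  have x_len: "length x \<le> length b" using x_b_prefix by (rule prefix_length_le)
  have "prefix x P" using x_len P(2) by (intro prefix_length_prefix[OF x_S P(1)]) simp
  then have take_P_x: "take (length x) P = x" using take_prefix_eq[of x P "length x"] by simp
  have take_P: "take r P = take r S" if "r \<le> length P" for r
    using take_prefix_eq[OF P(1) that] .
  have M: "length u \<le> M" "length x \<le> M" "M \<le> length b" using u x_len unfolding M_def by auto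
  have t_M: "t + M = length S" using M b_S unfolding t_def by simp
  have t_ge: "length S - length b \<le> t" using M unfolding t_def by simp
  have t_le: "t \<le> length P" using long M t_M by linarith
  have t_pos: "0 < t" using t_ge b_S by simp
  have x_at_t: "occ_at x S t"
  proof (cases "length x \<le> length u")
    case True
    have "prefix x u" using u True by (intro prefix_length_prefix[OF x_S]) (simp_all add: is_border_def)
    then have "occ_at x S (length S - length u + 0)"
      using u by (intro occ_at_trans[OF prefix_imp_occ_at suffix_imp_occ_at]) (auto simp: is_border_def)
    with True show ?thesis unfolding t_def M_def by (simp add: max_def)
  next
    case False
    then have "occ_at x b (length b - length x)" using x_b x_len by (intro covers_occ_at_end) auto
    then have "occ_at x S (length S - length b + (length b - length x))"
      by (rule occ_at_trans[OF _ suffix_imp_occ_at[OF b_S(3)]])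
    with False x_len b_S show ?thesis unfolding t_def M_def by (simp add: max_def)
  qed
  show ?thesis unfolding x_def[symmetric] M_def[symmetric] t_def[symmetric]
  proof
    assume "covers x S"
    moreover have "t - 1 < length S" using t_pos t_M by linarith
    ultimately obtain s where s: "s \<le> t - 1" "t - 1 < s + length x" "occ_at x S s"
      unfolding covers_def by blast
    show "t \<le> range_cov P (length x)"
    proof (cases "s + length x \<le> length P")
      case True
      have "covers x (take (s + length x) S)" using \<open>covers x S\<close> s(3) by (rule covers_take_occ_end)
      then have "s + length x \<le> range_cov P (length x)"
        using True take_P take_P_x by (intro range_cov_bounds(3)) auto
      with s show ?thesis by simp
    next
      case False
      have "s < t" using s(1) t_pos by linarith
      with s(2) False t_le have "is_period (t - s) x"
        by (intro occ_at_overlap_is_period[OF s(3) x_at_t]) auto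
      then have "length x < 2 * (t - s)" unfolding x_def by (rule length_cov_lt_period)
      with \<open>s < t\<close> have "length x + 2 * s < 2 * t" by linarith
      then show ?thesis using False long M(1,2) t_M by linarith
    qed
  next
    assume t_range: "t \<le> range_cov P (length x)"
    have "range_cov P (length x) \<le> length P" by (rule range_cov_bounds(1))
    then have "take (range_cov P (length x)) P = take (range_cov P (length x)) S" by (rule take_P)
    then have "covers x (take (range_cov P (length x)) S)"
      using range_cov_bounds(2)[of "length x" P] take_P_x by simp
    moreover have "length S \<le> range_cov P (length x) + length b" using t_ge t_range by linarith
    ultimately show "covers x S" by (rule covers_prefix_suffix[OF _ x_b b_S(3)])
  qed
qed

theorem lemma15:
  fixes T w u v :: "'a list" and i j k :: nat
  assumes "1 \<le> j" "j \<le> length T" "1 \<le> i" "i \<le> j + 1"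
    and "length (take (i - 1) T) \<ge> length (drop j T)"
    and "2 * length w \<le> length (take (i - 1) T)"
    and "periodic (take (i - 1) T @ w @ drop j T)"
    and "k \<ge> 2"
    and "take (i - 1) T @ w @ drop j T = concat (replicate k (u @ v)) @ u"
    and "length (u @ v) = per (take (i - 1) T @ w @ drop j T)"
    and "length (u @ v @ u) > length (take (i - 1) T @ w)"
  shows "covers (cov (bord (u @ v @ u))) (u @ v @ u) \<longleftrightarrow>
    range_cov (take (i - 1) T @ w) (length (cov (bord (u @ v @ u))))
      \<ge> length (u @ v @ u) - max (length u) (length (cov (bord (u @ v @ u))))"
proof -
  let ?T' = "take (i - 1) T @ w @ drop j T" and ?P = "take (i - 1) T @ w" and ?S = "u @ v @ u"
  define p where "p = length (u @ v)"
  have T'_ne: "?T' \<noteq> []" using assms(7) by (simp add: periodic_def)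
  have "is_period p ?T'" using is_period_per[OF T'_ne] assms(10) unfolding p_def by simp
  then have p_pos: "0 < p" by (simp add: is_period_def)
  obtain k' where "k = Suc (Suc k')" using assms(8) by (metis add_2_eq_Suc le_Suc_ex)
  then have "?T' = ?S @ v @ concat (replicate k' (u @ v)) @ u" using assms(9) by simp
  then have S_T': "prefix ?S ?T'" by (rule prefixI)
  have "suffix u ?S" by (rule suffixI[of _ "u @ v"]) simp
  then have "?S \<noteq> []" "is_border u ?S" using p_pos unfolding p_def by (auto simp: is_border_def)
  have "length ?T' = k * p + length u"
    using assms(9) unfolding p_def by (simp add: length_concat sum_list_replicate)
  moreover have "2 * p \<le> k * p" using assms(8) by simp
  moreover have "length ?T' \<le> 2 * length ?P" using assms(5) by simp
  ultimately have long: "2 * length ?S \<le> 2 * length ?P + length u" unfolding p_def by simp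
  have P_S: "prefix ?P ?S" using assms(11) by (intro prefix_length_prefix[OF _ S_T']) simp_all
  have "length (bord ?S) \<le> max p (length ?S - p)"
    using length_border_le_max_per[OF is_border_bord[OF \<open>?S \<noteq> []\<close>] S_T' T'_ne] assms(10)
    unfolding p_def by simp
  with long have bord_P: "length (bord ?S) \<le> length ?P" unfolding p_def by simp
  show ?thesis
    by (rule covers_cov_border_iff_range_cov[OF is_border_bord[OF \<open>?S \<noteq> []\<close>] \<open>is_border u ?S\<close>
          length_le_bord[OF \<open>is_border u ?S\<close>] P_S bord_P long])
qed

end
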